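(* Let $h,u,q$ be positive integers with $h\equiv 2$ or $4\pmod 6$, $u\equiv 0\pmod 3$, $u\ge 6$, and $q$ not divisible by $3$. Suppose there exists a $(u+1)$-GDD of type $q^{u+1}$. Call a positive integer $d$ admissible if $d\equiv h\pmod 3$ and $d\le h(u-1)/2$, and suppose that for every admissible $d$ there exists a 4-GDD of type $h^u d^1$; let $d_{\min}$ be the smallest admissible $d$. Then there exists a 4-GDD of type $(hq)^u m^1$ for every integer $m\equiv hq\pmod 3$ with $q\,d_{\min}\le m\le qh(u-1)/2$.
   Context: For a set $K$ of positive integers, a $K$-GDD (group divisible design) is a triple $(V,\mathcal G,\mathcal B)$ where $V$ is a finite set, $\mathcal G$ is a partition of $V$ into subsets called groups, $\mathcal B$ is a nonempty collection of subsets of $V$ (blocks) with sizes in $K$, such that every pair of points from distinct groups lies in exactly one block and no pair of points from the same group lies in any block. A $k$-GDD means a $\{k\}$-GDD. The type $g_1^{u_1}\cdots g_r^{u_r}$ means exactly $u_i$ groups of size $g_i$ for each $i$; type $h^u d^1$ means $u$ groups of size $h$ and one group of size $d$. *)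

theory Defs
  imports Main "HOL-Library.Multiset"
begin

definition is_GDD :: "nat set \<Rightarrow> 'a set \<Rightarrow> 'a set set \<Rightarrow> 'a set set \<Rightarrow> bool" where
  "is_GDD K V G B \<longleftrightarrow>
     finite V \<and>
     (\<forall>g\<in>G. g \<noteq> {} \<and> g \<subseteq> V) \<and> \<Union>G = V \<and>
     (\<forall>g1\<in>G. \<forall>g2\<in>G. g1 \<noteq> g2 \<longrightarrow> g1 \<inter> g2 = {}) \<and>
     B \<noteq> {} \<and>
     (\<forall>b\<in>B. b \<subseteq> V \<and> card b \<in> K) \<and>
     (\<forall>x\<in>V. \<forall>y\<in>V. x \<noteq> y \<longrightarrow> \<not> (\<exists>g\<in>G. x \<in> g \<and> y \<in> g) \<longrightarrow>
        (\<exists>!b. b \<in> B \<and> x \<in> b \<and> y \<in> b)) \<and>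
     (\<forall>b\<in>B. \<forall>g\<in>G. \<forall>x\<in>g. \<forall>y\<in>g. x \<noteq> y \<longrightarrow> \<not> (x \<in> b \<and> y \<in> b))"

definition gdd_type :: "'a set set \<Rightarrow> nat multiset" where
  "gdd_type G = image_mset card (mset_set G)"

definition GDD_exists :: "nat set \<Rightarrow> nat multiset \<Rightarrow> bool" where
  "GDD_exists K T \<longleftrightarrow> (\<exists>(V::nat set) G B. is_GDD K V G B \<and> gdd_type G = T)"

definition type_hu_d :: "nat \<Rightarrow> nat \<Rightarrow> nat \<Rightarrow> nat multiset" where
  "type_hu_d h u d = replicate_mset u h + {#d#}"

definition admissible :: "nat \<Rightarrow> nat \<Rightarrow> nat \<Rightarrow> bool" where
  "admissible h u d \<longleftrightarrow> 0 < d \<and> d mod 3 = h mod 3 \<and> 2 * d \<le> h * (u - 1)"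

end

theory Submission
  imports Defs "HOL-Combinatorics.Permutations"
begin

text \<open>Wilson's fundamental construction. Take a \<open>(u+1)\<close>-GDD of type \<open>q\<^sup>u\<^sup>+\<^sup>1\<close> and
  single out one group \<open>g\<^sub>0\<close>. Give every point outside \<open>g\<^sub>0\<close> weight \<open>h\<close> and every point
  \<open>x \<in> g\<^sub>0\<close> an admissible weight \<open>d\<^sub>x\<close>, with the \<open>d\<^sub>x\<close> summing to \<open>m\<close>. A block has
  \<open>u+1\<close> points, one in each group, so its weighted points carry a 4-GDD of type
  \<open>h\<^sup>u d\<^sub>x\<^sup>1\<close> by hypothesis. The union of these 4-GDDs is a 4-GDD on the inflated point set
  whose groups are the inflated groups, of sizes \<open>hq\<close> (\<open>u\<close> times) and \<open>m\<close>.

  The admissible weights form the progression \<open>d\<^sub>m\<^sub>i\<^sub>n, d\<^sub>m\<^sub>i\<^sub>n + 3, \<dots>, h(u-1)/2\<close>: its top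
  is \<open>\<equiv> h (mod 3)\<close> because \<open>h\<close> is even and \<open>u \<equiv> 0 (mod 3)\<close>. Hence every \<open>m \<equiv> q d\<^sub>m\<^sub>i\<^sub>n (mod 3)\<close>
  between \<open>q d\<^sub>m\<^sub>i\<^sub>n\<close> and \<open>q h(u-1)/2\<close> is a sum of \<open>q\<close> admissible numbers.\<close>

lemma is_GDD_D:
  assumes "is_GDD K V G B"
  shows "finite V" "\<forall>g\<in>G. g \<noteq> {} \<and> g \<subseteq> V" "\<Union>G = V"
    "\<forall>g1\<in>G. \<forall>g2\<in>G. g1 \<noteq> g2 \<longrightarrow> g1 \<inter> g2 = {}"
    "B \<noteq> {}" "\<forall>b\<in>B. b \<subseteq> V \<and> card b \<in> K"
    "\<forall>x\<in>V. \<forall>y\<in>V. x \<noteq> y \<longrightarrow> \<not> (\<exists>g\<in>G. x \<in> g \<and> y \<in> g) \<longrightarrow>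
        (\<exists>!b. b \<in> B \<and> x \<in> b \<and> y \<in> b)"
    "\<forall>b\<in>B. \<forall>g\<in>G. \<forall>x\<in>g. \<forall>y\<in>g. x \<noteq> y \<longrightarrow> \<not> (x \<in> b \<and> y \<in> b)"
  using assms unfolding is_GDD_def by simp_all

lemma is_GDD_I:
  assumes "finite V" "\<forall>g\<in>G. g \<noteq> {} \<and> g \<subseteq> V" "\<Union>G = V"
    "\<forall>g1\<in>G. \<forall>g2\<in>G. g1 \<noteq> g2 \<longrightarrow> g1 \<inter> g2 = {}"
    "B \<noteq> {}" "\<forall>b\<in>B. b \<subseteq> V \<and> card b \<in> K"
    "\<forall>x\<in>V. \<forall>y\<in>V. x \<noteq> y \<longrightarrow> \<not> (\<exists>g\<in>G. x \<in> g \<and> y \<in> g) \<longrightarrow>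
        (\<exists>!b. b \<in> B \<and> x \<in> b \<and> y \<in> b)"
    "\<forall>b\<in>B. \<forall>g\<in>G. \<forall>x\<in>g. \<forall>y\<in>g. x \<noteq> y \<longrightarrow> \<not> (x \<in> b \<and> y \<in> b)"
  shows "is_GDD K V G B"
  unfolding is_GDD_def using assms by (intro conjI)

lemma is_GDD_finite_groups: "is_GDD K V G B \<Longrightarrow> finite G"
  using is_GDD_D(1,2) by (metis Pow_iff finite_Pow_iff finite_subset subsetI)

lemma is_GDD_finite_group: "is_GDD K V G B \<Longrightarrow> g \<in> G \<Longrightarrow> finite g"
  using is_GDD_D(1,2) finite_subset by metis

lemma is_GDD_same_group:
  assumes "is_GDD K V G B" "g1 \<in> G" "g2 \<in> G" "v \<in> g1" "v \<in> g2"
  shows "g1 = g2"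
  using is_GDD_D(4)[OF assms(1)] assms(2-5) by blast

lemma is_GDD_group_of:
  assumes gdd: "is_GDD K V G B"
  obtains grp where "\<And>v. v \<in> V \<Longrightarrow> grp v \<in> G \<and> v \<in> grp v"
    and "\<And>g v. g \<in> G \<Longrightarrow> v \<in> g \<Longrightarrow> grp v = g"
proof -
  have "\<forall>v\<in>V. \<exists>g\<in>G. v \<in> g" using is_GDD_D(3)[OF gdd] by blast
  then obtain grp where grp: "\<And>v. v \<in> V \<Longrightarrow> grp v \<in> G \<and> v \<in> grp v" by metis
  moreover have "grp v = g" if "g \<in> G" "v \<in> g" for g v
  proof -
    have "v \<in> V" using is_GDD_D(2)[OF gdd] that by blast
    then show ?thesis using grp is_GDD_same_group[OF gdd] that by blast
  qed
  ultimately show ?thesis using that by blast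
qed

lemma is_GDD_block_meets_group:
  assumes gdd: "is_GDD K V G B" and b: "b \<in> B" and card_b: "card b = card G" and g: "g \<in> G"
  shows "b \<inter> g \<noteq> {}"
proof -
  obtain grp where grp: "\<And>v. v \<in> V \<Longrightarrow> grp v \<in> G \<and> v \<in> grp v"
    and "\<And>g v. g \<in> G \<Longrightarrow> v \<in> g \<Longrightarrow> grp v = g"
    using is_GDD_group_of[OF gdd] by metis
  have b_V: "b \<subseteq> V" using is_GDD_D(6)[OF gdd] b by blast
  have "inj_on grp b"
  proof (rule inj_onI)
    fix x y assume "x \<in> b" "y \<in> b" "grp x = grp y"
    then show "x = y" using is_GDD_D(8)[OF gdd] b b_V grp by (metis subsetD)
  qed
  moreover have "grp ` b \<subseteq> G" using grp b_V by blast
  ultimately have "grp ` b = G"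
    using card_b is_GDD_finite_groups[OF gdd] card_image card_subset_eq by metis
  then obtain x where "x \<in> b" "grp x = g" using g by blast
  then show ?thesis using grp b_V by blast
qed

lemma is_GDD_image:
  assumes gdd: "is_GDD K V G B" and inj: "inj_on f V"
  shows "is_GDD K (f ` V) ((`) f ` G) ((`) f ` B)"
proof -
  note D = is_GDD_D[OF gdd]
  have image_mem: "f x \<in> f ` A \<longleftrightarrow> x \<in> A" if "A \<subseteq> V" "x \<in> V" for A x
    using inj that by (auto simp: inj_on_def)
  show ?thesis
  proof (rule is_GDD_I; (intro ballI allI impI)?)
    show "finite (f ` V)" using D(1) by simp
  next
    fix g' assume "g' \<in> (`) f ` G"
    then show "g' \<noteq> {} \<and> g' \<subseteq> f ` V" using D(2) by auto
  next
    show "\<Union> ((`) f ` G) = f ` V" using D(3) by auto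
  next
    fix g1 g2 assume "g1 \<in> (`) f ` G" "g2 \<in> (`) f ` G" "g1 \<noteq> g2"
    then obtain h1 h2 where "h1 \<in> G" "h2 \<in> G" "g1 = f ` h1" "g2 = f ` h2" "h1 \<noteq> h2" by auto
    moreover have "f ` (h1 \<inter> h2) = f ` h1 \<inter> f ` h2" if "h1 \<in> G" "h2 \<in> G"
      using inj_on_image_Int[OF inj] D(2) that by blast
    ultimately show "g1 \<inter> g2 = {}" using D(4) by (metis image_empty)
  next
    show "(`) f ` B \<noteq> {}" using D(5) by simp
  next
    fix b' assume "b' \<in> (`) f ` B"
    then show "b' \<subseteq> f ` V \<and> card b' \<in> K"
      using D(6) inj by (auto simp: card_image inj_on_subset)
  next
    fix x' y' assume "x' \<in> f ` V" "y' \<in> f ` V" "x' \<noteq> y'"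
      and not_grouped: "\<not> (\<exists>g\<in>(`) f ` G. x' \<in> g \<and> y' \<in> g)"
    then obtain x y where xy: "x \<in> V" "y \<in> V" "x' = f x" "y' = f y" "x \<noteq> y" by auto
    moreover have "\<not> (\<exists>g\<in>G. x \<in> g \<and> y \<in> g)" using not_grouped xy by blast
    ultimately obtain b where b: "b \<in> B" "x \<in> b" "y \<in> b"
      and unique: "\<And>c. c \<in> B \<Longrightarrow> x \<in> c \<Longrightarrow> y \<in> c \<Longrightarrow> c = b" using D(7) by metis
    show "\<exists>!b'. b' \<in> (`) f ` B \<and> x' \<in> b' \<and> y' \<in> b'"
    proof
      show "f ` b \<in> (`) f ` B \<and> x' \<in> f ` b \<and> y' \<in> f ` b" using b xy by auto
    next
      fix c' assume "c' \<in> (`) f ` B \<and> x' \<in> c' \<and> y' \<in> c'"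
      then obtain c where "c \<in> B" "c' = f ` c" "x \<in> c" "y \<in> c"
        using xy image_mem D(6) by blast
      then show "c' = f ` b" using unique by auto
    qed
  next
    fix b' g' x' y' assume "b' \<in> (`) f ` B" "g' \<in> (`) f ` G" "x' \<in> g'" "y' \<in> g'" "x' \<noteq> y'"
    then obtain b g x y where b: "b \<in> B" "b' = f ` b" and g: "g \<in> G" "x \<in> g" "y \<in> g"
      and xy: "x' = f x" "y' = f y" "x \<noteq> y" by auto
    have "\<not> (x \<in> b \<and> y \<in> b)" using D(8) b g xy(3) by blast
    moreover have "x \<in> V" "y \<in> V" "b \<subseteq> V" using D(2,6) b g by blast+
    ultimately show "\<not> (x' \<in> b' \<and> y' \<in> b')" using image_mem b xy by simp
  qed
qed

lemma gdd_type_image: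
  assumes gdd: "is_GDD K V G B" and inj: "inj_on f V"
  shows "gdd_type ((`) f ` G) = gdd_type G"
proof -
  have groups: "G \<subseteq> Pow V" using is_GDD_D(2)[OF gdd] by blast
  then have "inj_on ((`) f) G" using inj_on_image_Pow[OF inj] inj_on_subset by blast
  then have "gdd_type ((`) f ` G) = image_mset (\<lambda>g. card (f ` g)) (mset_set G)"
    by (simp add: gdd_type_def image_mset_mset_set[symmetric] multiset.map_comp comp_def)
  also have "\<dots> = gdd_type G" unfolding gdd_type_def
    using groups inj is_GDD_finite_groups[OF gdd]
    by (intro image_mset_cong) (auto intro: card_image inj_on_subset)
  finally show ?thesis .
qed

lemma GDD_existsI:
  assumes gdd: "is_GDD K (V :: 'a set) G B" and "gdd_type G = T"
  shows "GDD_exists K T"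
proof -
  obtain f :: "'a \<Rightarrow> nat" where "inj_on f V"
    using finite_imp_inj_to_nat_seg[OF is_GDD_D(1)[OF gdd]] by blast
  then show ?thesis unfolding GDD_exists_def
    using is_GDD_image[OF gdd] gdd_type_image[OF gdd] assms(2) by blast
qed

lemma image_mset_eq_implies_bij_betw:
  assumes A: "finite A" and B: "finite B"
    and eq: "image_mset f (mset_set A) = image_mset g (mset_set B)"
  obtains \<sigma> where "bij_betw \<sigma> A B" "\<forall>x\<in>A. f x = g (\<sigma> x)"
proof -
  have "card A = card B" using arg_cong[OF eq, of size] by simp
  then obtain \<psi> where \<psi>: "bij_betw \<psi> A B" using finite_same_card_bij A B by blast
  then have "image_mset g (mset_set B) = image_mset (g \<circ> \<psi>) (mset_set A)"
    by (metis bij_betw_def image_mset_mset_set multiset.map_comp)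
  then obtain p where p: "p permutes A" "\<forall>x\<in>A. f x = (g \<circ> \<psi>) (p x)"
    using image_mset_eq_implies_permutes[OF A] eq by metis
  have "bij_betw (\<psi> \<circ> p) A B" using bij_betw_trans[OF permutes_imp_bij[OF p(1)] \<psi>] .
  then show ?thesis using that p(2) by simp
qed

lemma image_mset_mset_set_eq_replicate_add:
  assumes "finite A" "e \<in> A" "\<forall>x\<in>A - {e}. f x = c"
  shows "image_mset f (mset_set A) = replicate_mset (card A - 1) c + {#f e#}"
proof -
  have "image_mset f (mset_set (A - {e})) = image_mset (\<lambda>_. c) (mset_set (A - {e}))"
    using assms by (intro image_mset_cong) auto
  then show ?thesis
    using assms(1,2) by (simp add: mset_set.remove[of A e] image_mset_const_eq)
qed

lemma gdd_type_eq_replicate_mset: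
  assumes "is_GDD K V G B" "gdd_type G = replicate_mset n q"
  shows "card G = n" "g \<in> G \<Longrightarrow> card g = q"
proof -
  show "card G = n" using arg_cong[OF assms(2), of size] by (simp add: gdd_type_def)
  assume "g \<in> G"
  then have "card g \<in># gdd_type G"
    using is_GDD_finite_groups[OF assms(1)] by (simp add: gdd_type_def)
  then show "card g = q" using assms(2) by (simp split: if_splits)
qed

section \<open>Inflating points by weights\<close>

definition inflate :: "('a \<Rightarrow> nat) \<Rightarrow> 'a set \<Rightarrow> ('a \<times> nat) set" where
  "inflate w A = (SIGMA x:A. {..<w x})"

lemma mem_inflate [simp]: "(x, i) \<in> inflate w A \<longleftrightarrow> x \<in> A \<and> i < w x"
  by (simp add: inflate_def)

lemma card_inflate: "finite A \<Longrightarrow> card (inflate w A) = sum w A"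
  by (simp add: inflate_def)

lemma inflate_empty [simp]: "inflate w {} = {}"
  by (simp add: inflate_def)

lemma inflate_mono: "A \<subseteq> A' \<Longrightarrow> inflate w A \<subseteq> inflate w A'"
  by (auto simp: inflate_def)

lemma inflate_Int: "inflate w (A \<inter> A') = inflate w A \<inter> inflate w A'"
  by (auto simp: inflate_def)

lemma Union_image_inflate: "\<Union> (inflate w ` G) = inflate w (\<Union> G)"
  by (auto simp: inflate_def)

lemma inflate_eq_UN: "inflate w A = (\<Union>x\<in>A. inflate w {x})"
  by (auto simp: inflate_def)

lemma fst_inflate: "(\<And>x. x \<in> A \<Longrightarrow> 0 < w x) \<Longrightarrow> fst ` inflate w A = A"
  by (force simp: inflate_def)

lemma GDD_on_inflate_if_gdd_type:
  assumes gdd: "is_GDD K V G B" and X: "finite X"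
    and type: "gdd_type G = image_mset w (mset_set X)"
  shows "\<exists>B'. is_GDD K (inflate w X) ((\<lambda>x. inflate w {x}) ` X) B'"
proof -
  obtain \<sigma> where \<sigma>: "bij_betw \<sigma> G X" and card_g: "\<forall>g\<in>G. card g = w (\<sigma> g)"
    using image_mset_eq_implies_bij_betw[OF is_GDD_finite_groups[OF gdd] X]
      type[unfolded gdd_type_def] by metis
  have "\<forall>g\<in>G. \<exists>t. bij_betw t g (inflate w {\<sigma> g})"
    using card_g is_GDD_finite_group[OF gdd]
    by (auto intro!: finite_same_card_bij simp: card_inflate inflate_def)
  then obtain \<tau> where \<tau>: "\<And>g. g \<in> G \<Longrightarrow> bij_betw (\<tau> g) g (inflate w {\<sigma> g})" by metis
  obtain grp where grp: "\<And>v. v \<in> V \<Longrightarrow> grp v \<in> G \<and> v \<in> grp v"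
    and grp_eq: "\<And>g v. g \<in> G \<Longrightarrow> v \<in> g \<Longrightarrow> grp v = g"
    using is_GDD_group_of[OF gdd] by metis
  define f where "f v = \<tau> (grp v) v" for v
  have image_group: "f ` g = inflate w {\<sigma> g}" if "g \<in> G" for g
  proof -
    have "f ` g = \<tau> g ` g" unfolding f_def using grp_eq that by simp
    then show ?thesis using \<tau>[OF that] by (simp add: bij_betw_def)
  qed
  have "inj_on f V"
  proof (rule inj_onI)
    fix v1 v2 assume v: "v1 \<in> V" "v2 \<in> V" "f v1 = f v2"
    have f_v: "f v \<in> inflate w {\<sigma> (grp v)}" if "v \<in> V" for v
      using image_group grp that by blast
    have "\<sigma> (grp v1) = \<sigma> (grp v2)" using f_v[OF v(1)] f_v[OF v(2)] v(3) by (auto simp: inflate_def)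
    then have "grp v1 = grp v2" using \<sigma> grp v by (metis bij_betw_iff_bijections)
    then show "v1 = v2"
      using \<tau> grp v unfolding f_def by (metis bij_betw_iff_bijections)
  qed
  moreover have "f ` V = inflate w X"
  proof -
    have "f ` V = (\<Union>g\<in>G. f ` g)" using is_GDD_D(3)[OF gdd] by blast
    also have "\<dots> = (\<Union>x\<in>\<sigma> ` G. inflate w {x})" using image_group by simp
    finally show ?thesis using \<sigma> inflate_eq_UN by (metis bij_betw_imp_surj_on)
  qed
  moreover have "(`) f ` G = (\<lambda>x. inflate w {x}) ` X"
    using image_group \<sigma> by (auto simp: bij_betw_def image_image cong: image_cong)
  ultimately show ?thesis using is_GDD_image[OF gdd] by metis
qed

section \<open>Wilson's fundamental construction\<close>

locale wilson_construction =
  fixes K0 :: "nat set" and V :: "'a set" and G B :: "'a set set"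
    and w :: "'a \<Rightarrow> nat" and K :: "nat set" and Bb :: "'a set \<Rightarrow> ('a \<times> nat) set set"
  assumes master: "is_GDD K0 V G B"
    and weight_pos: "\<And>x. x \<in> V \<Longrightarrow> 0 < w x"
    and ingredient: "\<And>b. b \<in> B \<Longrightarrow> is_GDD K (inflate w b) ((\<lambda>x. inflate w {x}) ` b) (Bb b)"
begin

lemma ingredient_block_subset: "b \<in> B \<Longrightarrow> c \<in> Bb b \<Longrightarrow> c \<subseteq> inflate w b"
  using is_GDD_D(6)[OF ingredient] by blast

lemma pair_in_unique_block:
  assumes p: "(x, i) \<in> inflate w V" and p': "(y, j) \<in> inflate w V" and ne: "(x, i) \<noteq> (y, j)"
    and not_grouped: "\<not> (\<exists>g\<in>G. x \<in> g \<and> y \<in> g)"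
  shows "\<exists>!c. c \<in> (\<Union>b\<in>B. Bb b) \<and> (x, i) \<in> c \<and> (y, j) \<in> c"
proof -
  have "x \<noteq> y" using not_grouped p is_GDD_D(3)[OF master] by auto
  then obtain b where b: "b \<in> B" "x \<in> b" "y \<in> b"
    and b_unique: "\<And>b'. b' \<in> B \<Longrightarrow> x \<in> b' \<Longrightarrow> y \<in> b' \<Longrightarrow> b' = b"
    using is_GDD_D(7)[OF master] p p' not_grouped by (metis mem_inflate)
  have "\<not> (\<exists>g\<in>(\<lambda>x. inflate w {x}) ` b. (x, i) \<in> g \<and> (y, j) \<in> g)"
    using \<open>x \<noteq> y\<close> by auto
  moreover have "(x, i) \<in> inflate w b" "(y, j) \<in> inflate w b" using p p' b by auto
  ultimately obtain c where c: "c \<in> Bb b" "(x, i) \<in> c" "(y, j) \<in> c"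
    and c_unique: "\<And>c'. c' \<in> Bb b \<Longrightarrow> (x, i) \<in> c' \<Longrightarrow> (y, j) \<in> c' \<Longrightarrow> c' = c"
    using is_GDD_D(7)[OF ingredient[OF b(1)]] ne by metis
  show ?thesis
  proof
    show "c \<in> (\<Union>b\<in>B. Bb b) \<and> (x, i) \<in> c \<and> (y, j) \<in> c" using b c by blast
  next
    fix c' assume c': "c' \<in> (\<Union>b\<in>B. Bb b) \<and> (x, i) \<in> c' \<and> (y, j) \<in> c'"
    then obtain b' where b': "b' \<in> B" "c' \<in> Bb b'" by blast
    then have "(x, i) \<in> inflate w b'" "(y, j) \<in> inflate w b'"
      using ingredient_block_subset c' by blast+
    then have "x \<in> b'" "y \<in> b'" by simp_all
    then show "c' = c" using b_unique b' c_unique c' by blast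
  qed
qed

lemma no_block_within_group:
  assumes c: "c \<in> (\<Union>b\<in>B. Bb b)" and g: "g \<in> G"
    and p: "(x, i) \<in> inflate w g" and p': "(y, j) \<in> inflate w g" and ne: "(x, i) \<noteq> (y, j)"
  shows "\<not> ((x, i) \<in> c \<and> (y, j) \<in> c)"
proof
  assume in_c: "(x, i) \<in> c \<and> (y, j) \<in> c"
  obtain b where b: "b \<in> B" "c \<in> Bb b" using c by blast
  then have "(x, i) \<in> inflate w b" "(y, j) \<in> inflate w b"
    using ingredient_block_subset in_c by blast+
  then have "x \<in> b" "y \<in> b" by simp_all
  show False
  proof (cases "x = y")
    case True
    then have "inflate w {x} \<in> (\<lambda>x. inflate w {x}) ` b" "(x, i) \<in> inflate w {x}" "(y, j) \<in> inflate w {x}"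
      using \<open>x \<in> b\<close> p p' by auto
    from is_GDD_D(8)[OF ingredient[OF b(1)], rule_format, OF b(2) this ne] show False
      using in_c by blast
  next
    case False
    moreover have "x \<in> g" "y \<in> g" using p p' by simp_all
    ultimately show False using is_GDD_D(8)[OF master] b(1) g \<open>x \<in> b\<close> \<open>y \<in> b\<close> by blast
  qed
qed

theorem is_GDD: "is_GDD K (inflate w V) (inflate w ` G) (\<Union>b\<in>B. Bb b)"
proof (rule is_GDD_I)
  note D = is_GDD_D[OF master]
  show "finite (inflate w V)" using D(1) by (simp add: inflate_def)
  show "\<Union> (inflate w ` G) = inflate w V" using D(3) by (simp add: Union_image_inflate)
  show "(\<Union>b\<in>B. Bb b) \<noteq> {}" using D(5) is_GDD_D(5)[OF ingredient] by blast
  show "\<forall>g'\<in>inflate w ` G. g' \<noteq> {} \<and> g' \<subseteq> inflate w V"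
  proof
    fix g' assume "g' \<in> inflate w ` G"
    then obtain g where g: "g \<in> G" "g' = inflate w g" by blast
    have "g \<noteq> {}" "g \<subseteq> V" using D(2) g(1) by blast+
    moreover have "fst ` g' = g" unfolding g(2) using weight_pos \<open>g \<subseteq> V\<close> by (intro fst_inflate) blast
    ultimately show "g' \<noteq> {} \<and> g' \<subseteq> inflate w V" using g(2) inflate_mono by auto
  qed
  show "\<forall>g1\<in>inflate w ` G. \<forall>g2\<in>inflate w ` G. g1 \<noteq> g2 \<longrightarrow> g1 \<inter> g2 = {}"
  proof (intro ballI impI)
    fix g1 g2 assume "g1 \<in> inflate w ` G" "g2 \<in> inflate w ` G" "g1 \<noteq> g2"
    then obtain h1 h2 where "h1 \<in> G" "h2 \<in> G" "h1 \<noteq> h2" "g1 = inflate w h1" "g2 = inflate w h2"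
      by blast
    moreover from this have "h1 \<inter> h2 = {}" using D(4) by blast
    ultimately show "g1 \<inter> g2 = {}" by (simp add: inflate_Int[symmetric])
  qed
  show "\<forall>c\<in>\<Union>b\<in>B. Bb b. c \<subseteq> inflate w V \<and> card c \<in> K"
  proof
    fix c assume "c \<in> (\<Union>b\<in>B. Bb b)"
    then obtain b where b: "b \<in> B" "c \<in> Bb b" by blast
    have "c \<subseteq> inflate w b" using ingredient_block_subset b by blast
    also have "\<dots> \<subseteq> inflate w V" using D(6) b(1) inflate_mono by blast
    finally show "c \<subseteq> inflate w V \<and> card c \<in> K" using is_GDD_D(6)[OF ingredient[OF b(1)]] b(2) by blast
  qed
  show "\<forall>p\<in>inflate w V. \<forall>p'\<in>inflate w V. p \<noteq> p' \<longrightarrow> \<not> (\<exists>g\<in>inflate w ` G. p \<in> g \<and> p' \<in> g)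
      \<longrightarrow> (\<exists>!c. c \<in> (\<Union>b\<in>B. Bb b) \<and> p \<in> c \<and> p' \<in> c)"
    using pair_in_unique_block by (auto simp: inflate_def)
  show "\<forall>c\<in>\<Union>b\<in>B. Bb b. \<forall>g'\<in>inflate w ` G. \<forall>p\<in>g'. \<forall>p'\<in>g'. p \<noteq> p' \<longrightarrow> \<not> (p \<in> c \<and> p' \<in> c)"
  proof (intro ballI impI)
    fix c g' p p' assume "c \<in> (\<Union>b\<in>B. Bb b)" "g' \<in> inflate w ` G" "p \<in> g'" "p' \<in> g'" "p \<noteq> p'"
    then show "\<not> (p \<in> c \<and> p' \<in> c)"
      using no_block_within_group by (cases p, cases p') blast
  qed
qed

lemma gdd_type: "gdd_type (inflate w ` G) = image_mset (sum w) (mset_set G)"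
proof -
  have "fst ` inflate w g = g" if "g \<in> G" for g
    using is_GDD_D(2)[OF master] weight_pos that by (intro fst_inflate) blast
  then have "inj_on (inflate w) G" by (metis inj_on_inverseI)
  then have "gdd_type (inflate w ` G) = image_mset (card \<circ> inflate w) (mset_set G)"
    by (simp add: gdd_type_def image_mset_mset_set[symmetric] multiset.map_comp)
  also have "\<dots> = image_mset (sum w) (mset_set G)"
    using is_GDD_finite_groups[OF master] is_GDD_finite_group[OF master]
    by (intro image_mset_cong) (simp add: card_inflate)
  finally show ?thesis .
qed

end

section \<open>Weighting a transversal design\<close>

lemma GDD_on_inflated_block:
  assumes master: "is_GDD K0 V G B" and b: "b \<in> B" and card_b: "card b = Suc u"
    and card_G: "card G = Suc u" and g: "g \<in> G" and outside: "\<forall>x. x \<notin> g \<longrightarrow> w x = h"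
    and ingredients: "\<forall>x\<in>g. GDD_exists K (type_hu_d h u (w x))"
  shows "\<exists>Bb. is_GDD K (inflate w b) ((\<lambda>x. inflate w {x}) ` b) Bb"
proof -
  obtain e where e: "e \<in> b" "e \<in> g"
    using is_GDD_block_meets_group[OF master b _ g] card_b card_G by auto
  have "\<forall>x\<in>b - {e}. w x = h"
    using is_GDD_D(8)[OF master] b g e outside by blast
  moreover have "finite b" using card_b card_ge_0_finite by force
  ultimately have "image_mset w (mset_set b) = type_hu_d h u (w e)"
    using image_mset_mset_set_eq_replicate_add[OF _ e(1)] card_b by (simp add: type_hu_d_def)
  moreover obtain V' :: "nat set" and G' B' where "is_GDD K V' G' B'" "gdd_type G' = type_hu_d h u (w e)"
    using ingredients e(2) unfolding GDD_exists_def by blast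
  ultimately show ?thesis using GDD_on_inflate_if_gdd_type \<open>finite b\<close> by metis
qed

lemma GDD_exists_inflate_one_group:
  assumes master: "is_GDD {u + 1} V G B" and type: "gdd_type G = replicate_mset (u + 1) q"
    and g0: "g0 \<in> G" and outside: "\<forall>x. x \<notin> g0 \<longrightarrow> w x = h" and "0 < h"
    and weights: "\<forall>x\<in>g0. 0 < w x \<and> GDD_exists K (type_hu_d h u (w x))"
  shows "GDD_exists K (type_hu_d (h * q) u (sum w g0))"
proof -
  note card_G = gdd_type_eq_replicate_mset[OF master type]
  have "\<exists>Bb. is_GDD K (inflate w b) ((\<lambda>x. inflate w {x}) ` b) Bb" if "b \<in> B" for b
    using GDD_on_inflated_block[OF master that _ _ g0 outside] weights
      is_GDD_D(6)[OF master] that card_G(1) by simp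
  then obtain Bb where "\<And>b. b \<in> B \<Longrightarrow> is_GDD K (inflate w b) ((\<lambda>x. inflate w {x}) ` b) (Bb b)"
    by metis
  then interpret wilson_construction "{u + 1}" V G B w K Bb
    using master weights outside \<open>0 < h\<close> by unfold_locales metis+
  have "\<forall>g\<in>G - {g0}. sum w g = h * q"
  proof
    fix g assume g: "g \<in> G - {g0}"
    then have "g \<inter> g0 = {}" using is_GDD_D(4)[OF master] g0 by blast
    then have "sum w g = sum (\<lambda>_. h) g" using outside by (intro sum.cong) auto
    then show "sum w g = h * q" using g card_G(2) by simp
  qed
  then have "gdd_type (inflate w ` G) = type_hu_d (h * q) u (sum w g0)"
    using image_mset_mset_set_eq_replicate_add[OF is_GDD_finite_groups[OF master] g0]
    by (simp add: gdd_type card_G(1) type_hu_d_def)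
  then show ?thesis using GDD_existsI[OF is_GDD] by blast
qed

section \<open>Splitting \<open>m\<close> into admissible parts\<close>

lemma ex_bounded_summands:
  assumes "finite A" "t \<le> card A * K"
  shows "\<exists>k :: 'a \<Rightarrow> nat. (\<forall>a\<in>A. k a \<le> K) \<and> sum k A = t"
  using assms
proof (induction A arbitrary: t rule: finite_induct)
  case empty
  then show ?case by simp
next
  case (insert a A)
  have "t - min t K \<le> card A * K" using insert by auto
  then obtain k where k: "\<forall>a\<in>A. k a \<le> K" "sum k A = t - min t K" using insert by blast
  have "sum (k(a := min t K)) A = sum k A" using insert by (intro sum.cong) auto
  then have "sum (k(a := min t K)) (insert a A) = t" using insert k by simp
  moreover have "\<forall>x\<in>insert a A. (k(a := min t K)) x \<le> K" using k by auto
  ultimately show ?case by blast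
qed

lemma admissible_iff:
  "even (h :: nat) \<Longrightarrow> admissible h u d \<longleftrightarrow> 0 < d \<and> d mod 3 = h mod 3 \<and> d \<le> h div 2 * (u - 1)"
  by (auto simp: admissible_def elim!: evenE)

lemma half_mult_pred_mod_3:
  fixes h u :: nat
  assumes "even h" "u mod 3 = 0" "0 < u"
  shows "(h div 2 * (u - 1)) mod 3 = h mod 3"
proof -
  obtain k where "u = 3 * k" using assms(2) by (metis dvdE mod_0_imp_dvd)
  with assms(3) obtain k' where "u - 1 = 2 + 3 * k'" by (cases k) auto
  then have "h div 2 * (u - 1) = h div 2 * 2 + 3 * (h div 2 * k')" by (simp add: algebra_simps)
  then have "(h div 2 * (u - 1)) mod 3 = (h div 2 * 2) mod 3" by simp
  then show ?thesis using assms(1) by simp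
qed

lemma admissible_Least:
  assumes "0 < h" "3 \<le> u"
  shows "admissible h u (LEAST d. admissible h u d)"
proof (rule LeastI)
  show "admissible h u h" using assms by (simp add: admissible_def)
qed

lemma admissible_decomposition:
  fixes A :: "'a set"
  assumes h: "even h" and u: "u mod 3 = 0" and d: "admissible h u d" and A: "finite A"
    and m_mod: "m mod 3 = (card A * d) mod 3" and m_lower: "card A * d \<le> m"
    and m_upper: "2 * m \<le> card A * h * (u - 1)"
  obtains dl where "\<forall>x\<in>A. admissible h u (dl x)" "sum dl A = m"
proof -
  define H where "H = h div 2 * (u - 1)"
  have adm_iff: "admissible h u x \<longleftrightarrow> 0 < x \<and> x mod 3 = h mod 3 \<and> x \<le> H" for x
    using admissible_iff[OF h] by (simp add: H_def)
  have "0 < u" using d by (auto simp: admissible_def)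
  then have "H mod 3 = d mod 3" using d h u half_mult_pred_mod_3 by (simp add: H_def adm_iff)
  moreover have "d \<le> H" using d by (simp add: adm_iff)
  ultimately obtain K where K: "H = d + 3 * K"
    by (metis dvdE le_add_diff_inverse mod_eq_dvd_iff_nat)
  obtain t where t: "m = card A * d + 3 * t"
    using m_mod m_lower by (metis dvdE le_add_diff_inverse mod_eq_dvd_iff_nat)
  have "h * (u - 1) = 2 * H" using h by (auto simp: H_def elim!: evenE)
  then have "card A * h * (u - 1) = 2 * (card A * H)" by (metis mult.assoc mult.left_commute)
  then have "t \<le> card A * K" using t K m_upper by (simp add: algebra_simps)
  then obtain k where k: "\<forall>x\<in>A. k x \<le> K" "sum k A = t" using ex_bounded_summands[OF A] by blast
  have "\<forall>x\<in>A. admissible h u (d + 3 * k x)"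
    using k(1) d K by (auto simp: adm_iff)
  moreover have "sum (\<lambda>x. d + 3 * k x) A = m" using k(2) t by (simp add: sum.distrib sum_distrib_left[symmetric])
  ultimately show ?thesis by (rule that)
qed

theorem theorem3p3:
  fixes h u q :: nat
  assumes "0 < h" "0 < u" "0 < q"
    and "h mod 6 = 2 \<or> h mod 6 = 4"
    and "u mod 3 = 0" and "u \<ge> 6"
    and "\<not> 3 dvd q"
    and "GDD_exists {u + 1} (replicate_mset (u + 1) q)"
    and "\<forall>d. admissible h u d \<longrightarrow> GDD_exists {4} (type_hu_d h u d)"
  shows "\<forall>m::nat. m mod 3 = (h * q) mod 3 \<and> q * (LEAST d. admissible h u d) \<le> m
            \<and> 2 * m \<le> q * h * (u - 1) \<longrightarrow> GDD_exists {4} (type_hu_d (h * q) u m)"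
proof (intro allI impI, elim conjE)
  fix m :: nat
  assume m_mod: "m mod 3 = (h * q) mod 3" and m_lower: "q * (LEAST d. admissible h u d) \<le> m"
    and m_upper: "2 * m \<le> q * h * (u - 1)"
  obtain V :: "nat set" and G B where master: "is_GDD {u + 1} V G B"
    and type: "gdd_type G = replicate_mset (u + 1) q"
    using assms(8) unfolding GDD_exists_def by blast
  note card_G = gdd_type_eq_replicate_mset[OF master type]
  then obtain g0 where g0: "g0 \<in> G" by fastforce
  define d_min where "d_min = (LEAST d. admissible h u d)"
  have adm_d_min: "admissible h u d_min" unfolding d_min_def using admissible_Least assms(1,6) by simp
  then have "m mod 3 = (card g0 * d_min) mod 3" using m_mod card_G(2)[OF g0]
    by (metis admissible_def mod_mult_right_eq mult.commute)
  moreover have "even h" using assms(4) by presburger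
  ultimately obtain dl where dl: "\<forall>x\<in>g0. admissible h u (dl x)" "sum dl g0 = m"
    using admissible_decomposition[OF _ assms(5) adm_d_min is_GDD_finite_group[OF master g0]]
      m_lower m_upper card_G(2)[OF g0] by (metis d_min_def mult.commute)
  define w where "w x = (if x \<in> g0 then dl x else h)" for x
  have "\<forall>x. x \<notin> g0 \<longrightarrow> w x = h" by (simp add: w_def)
  moreover have "\<forall>x\<in>g0. 0 < w x \<and> GDD_exists {4} (type_hu_d h u (w x))"
    using dl(1) assms(9) by (simp add: w_def admissible_def)
  ultimately have "GDD_exists {4} (type_hu_d (h * q) u (sum w g0))"
    by (rule GDD_exists_inflate_one_group[OF master type g0 _ assms(1)])
  moreover have "sum w g0 = m" using dl(2) by (simp add: w_def)
  ultimately show "GDD_exists {4} (type_hu_d (h * q) u m)" by simp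
qed

end
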